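(* Let $T:\mathcal{X}\to\mathcal{X}$, $\mathcal{X}\subseteq\mathbb{R}^n$, and data points $x_1,\dots,x_N$ with $x_i^+=T(x_i)$. Let $\Psi=[\psi_1,\dots,\psi_s]$ be a dictionary of real-valued observables spanning $\mathcal{S}$, and let $A=\Psi(X)\in\mathbb{R}^{N\times s}$ and $B=\Psi(X^+)\in\mathbb{R}^{N\times s}$ (rows $\Psi(x_i)$, $\Psi(x_i^+)$) have full column rank. Define the forward and backward EDMD matrices $K_f=A^\dagger B$, $K_b=B^\dagger A$ and the consistency matrix $M_c=I-K_fK_b\in\mathbb{R}^{s\times s}$. Let $\theta_1,\dots,\theta_s$ be the principal angles between $\mathcal{R}(A)$ and $\mathcal{R}(B)$ in $\mathbb{R}^N$ (equivalently, between $\mathcal{S}$ and $\mathcal{K}\mathcal{S}=\mathrm{span}\{\psi_j\circ T\}$ with the empirical inner product $\langle f,g\rangle=\frac1N\sum_i f(x_i)g(x_i)$). Then: (1) the eigenvalues $\lambda_1,\dots,\lambda_s$ of $M_c$ (with multiplicity) are $\lambda_i=\sin^2\theta_i$, $i=1,\dots,s$; (2) $M_c$ has eigenvectors $v_1,\dots,v_s$ with $M_cv_i=\sin^2\theta_i\,v_i$ such that $Av_i$ is the $i$-th principal vector of $\mathcal{R}(A)$ (with respect to $\mathcal{R}(B)$); correspondingly the function $u_i^{\mathcal{S}}(\cdot)=\Psi(\cdot)v_i$ is the $i$-th principal vector of $\mathcal{S}$ with respect to $\mathcal{K}\mathcal{S}$, for all $i=1,\dots,s$.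
   Context: $M^\dagger$ denotes the Moore–Penrose pseudoinverse and $\mathcal{R}(M)$ the column space. Principal angles and vectors: for subspaces $\mathcal{U},\mathcal{V}$ of an inner product space with $\dim\mathcal{U}=d_1$, $\dim\mathcal{V}=d_2$, $k=\min\{d_1,d_2\}$, the principal angles $0\le\theta_1\le\dots\le\theta_k\le\pi/2$ are defined recursively by $\cos\theta_j=\max|\langle u,v\rangle|$ over unit $u\in\mathcal{U}$, $v\in\mathcal{V}$ orthogonal to the previously chosen $u_1,\dots,u_{j-1}$ and $v_1,\dots,v_{j-1}$ respectively; the maximizers $(u_j,v_j)$ are the $j$-th pair of principal vectors. Observables are identified with their value vectors on the data points $x_1,\dots,x_N$ (unit normalization understood up to the constant factor from the empirical measure). *)

theory Defs
  imports "HOL-Analysis.Analysis"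
begin

definition pinv :: "real^'c^'r \<Rightarrow> real^'r^'c" where
  "pinv M = (THE X. M ** X ** M = M \<and> X ** M ** X = X \<and>
                    transpose (M ** X) = M ** X \<and> transpose (X ** M) = X ** M)"

definition col_space :: "real^'c^'r \<Rightarrow> (real^'r) set" where
  "col_space M = range (\<lambda>c. M *v c)"

definition principal_vectors ::
  "'a::real_inner set \<Rightarrow> 'a set \<Rightarrow> nat \<Rightarrow> (nat \<Rightarrow> 'a) \<Rightarrow> (nat \<Rightarrow> 'a) \<Rightarrow> bool" where
  "principal_vectors U V k u v \<longleftrightarrow>
     (\<forall>j<k. u j \<in> U \<and> v j \<in> V \<and> norm (u j) = 1 \<and> norm (v j) = 1 \<and>
        (\<forall>i<j. u j \<bullet> u i = 0 \<and> v j \<bullet> v i = 0) \<and>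
        (\<forall>u' v'. u' \<in> U \<and> v' \<in> V \<and> norm u' = 1 \<and> norm v' = 1 \<and>
           (\<forall>i<j. u' \<bullet> u i = 0 \<and> v' \<bullet> v i = 0) \<longrightarrow> \<bar>u' \<bullet> v'\<bar> \<le> \<bar>u j \<bullet> v j\<bar>))"

definition principal_angle :: "(nat \<Rightarrow> 'a::real_inner) \<Rightarrow> (nat \<Rightarrow> 'a) \<Rightarrow> nat \<Rightarrow> real" where
  "principal_angle u v j = arccos \<bar>u j \<bullet> v j\<bar>"

end

theory Submission
  imports Defs
begin

(* Let P_A = A A^+ and P_B = B B^+ be the orthogonal projections onto R(A) and R(B). For principal
   vectors (u_i, w_i) one has P_B u_i = cos(theta_i) w_i and P_A w_i = cos(theta_i) u_i: by induction
   on i, P_B u_i is orthogonal to the earlier w_j (they project back onto multiples of the u_j), so its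
   normalisation competes with w_i in the maximisation, and equality in Cauchy-Schwarz forces P_B u_i
   onto the line of w_i. Hence v_i = A^+ u_i satisfies
   K_f K_b v_i = A^+ P_B u_i = cos(theta_i) A^+ w_i = cos(theta_i)^2 v_i, i.e. M_c v_i = sin(theta_i)^2 v_i.
   As the A v_i = u_i are orthonormal, the v_i are an eigenbasis, so the characteristic polynomial of
   M_c factors over the sin(theta_i)^2. *)

definition penrose :: "real^'c^'r \<Rightarrow> real^'r^'c \<Rightarrow> bool" where
  "penrose M X \<longleftrightarrow> M ** X ** M = M \<and> X ** M ** X = X \<and>
     transpose (M ** X) = M ** X \<and> transpose (X ** M) = X ** M"

lemma penrose_unique:
  assumes X: "penrose M X" and Y: "penrose M Y"
  shows "X = Y"
proof -
  have X1: "M ** X ** M = M" and X2: "X ** M ** X = X"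
    and X3: "transpose (M ** X) = M ** X" and X4: "transpose (X ** M) = X ** M"
    using X unfolding penrose_def by auto
  have Y1: "M ** Y ** M = M" and Y2: "Y ** M ** Y = Y"
    and Y3: "transpose (M ** Y) = M ** Y" and Y4: "transpose (Y ** M) = Y ** M"
    using Y unfolding penrose_def by auto
  have "X = X ** transpose (M ** X)"
    using X2 X3 by (simp add: matrix_mul_assoc)
  also have "\<dots> = X ** transpose X ** transpose (M ** Y ** M)"
    using Y1 by (simp add: matrix_transpose_mul matrix_mul_assoc)
  also have "\<dots> = X ** transpose (M ** X) ** transpose (M ** Y)"
    by (simp add: matrix_transpose_mul matrix_mul_assoc)
  also have "\<dots> = X ** M ** Y"
    using X2 X3 Y3 by (simp add: matrix_mul_assoc)
  finally have XY: "X = X ** M ** Y" .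
  have "Y = transpose (Y ** M) ** Y"
    using Y2 Y4 by simp
  also have "\<dots> = transpose (M ** X ** M) ** transpose Y ** Y"
    using X1 by (simp add: matrix_transpose_mul matrix_mul_assoc)
  also have "\<dots> = transpose (X ** M) ** transpose (Y ** M) ** Y"
    by (simp add: matrix_transpose_mul matrix_mul_assoc)
  also have "\<dots> = X ** M ** (Y ** M ** Y)"
    using X4 Y4 by (simp add: matrix_mul_assoc)
  also have "\<dots> = X ** M ** Y"
    using Y2 by simp
  finally show ?thesis using XY by simp
qed

lemma pinv_eqI:
  assumes "penrose M X"
  shows "pinv M = X"
  unfolding pinv_def penrose_def[symmetric]
  using assms penrose_unique by blast

lemma gram_matrix_left_invertible:
  fixes A :: "real^'c^'r"
  assumes injA: "inj ((*v) A)"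
  shows "\<exists>M. M ** (transpose A ** A) = mat 1"
  unfolding matrix_left_invertible_injective
proof (rule injI)
  fix x y assume "(transpose A ** A) *v x = (transpose A ** A) *v y"
  then have "transpose A *v (A *v (x - y)) = 0"
    by (simp add: matrix_vector_mul_assoc[symmetric] matrix_vector_mult_diff_distrib)
  then have "(A *v (x - y)) \<bullet> (A *v (x - y)) = 0"
    by (metis dot_lmul_matrix inner_zero_left transpose_matrix_vector)
  then have "A *v x = A *v y"
    by (simp add: matrix_vector_mult_diff_distrib)
  then show "x = y" using injA by (simp add: inj_eq)
qed

lemma penrose_pinv_if_full_column_rank:
  fixes A :: "real^'c^'r"
  assumes "rank A = CARD('c)"
  shows "penrose A (pinv A)"
proof -
  let ?C = "transpose A ** A"
  obtain M where MC: "M ** ?C = mat 1"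
    using gram_matrix_left_invertible assms full_rank_injective by blast
  then have CM: "?C ** M = mat 1" using matrix_left_right_inverse by blast
  have "transpose M = transpose M ** (?C ** M)" using CM by simp
  also have "\<dots> = transpose (?C ** M) ** M"
    by (simp add: matrix_transpose_mul matrix_mul_assoc)
  finally have M_sym: "transpose M = M" using CM by simp
  define G where "G = M ** transpose A"
  have GA: "G ** A = mat 1" unfolding G_def using MC by (simp add: matrix_mul_assoc)
  have "penrose A G"
    unfolding penrose_def using GA
    by (simp add: matrix_mul_assoc[symmetric] G_def matrix_transpose_mul M_sym)
  then have "pinv A = G" by (rule pinv_eqI)
  then show ?thesis using \<open>penrose A G\<close> by simp
qed

definition orthogonal_projector :: "'a::real_inner set \<Rightarrow> ('a \<Rightarrow> 'a) \<Rightarrow> bool" where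
  "orthogonal_projector V P \<longleftrightarrow> (\<forall>y. P y \<in> V) \<and> (\<forall>y z. z \<in> V \<longrightarrow> (y - P y) \<bullet> z = 0)"

lemma subspace_col_space: "subspace (col_space A)"
  unfolding col_space_def
  by (intro linear_subspace_image matrix_vector_mul_linear subspace_UNIV)

lemma dim_col_space: "dim (col_space (A::real^'c^'r)) = rank A"
  unfolding col_space_def by (simp add: rank_dim_range)

lemma penrose_mult_col_space:
  assumes "penrose A X" and "y \<in> col_space A"
  shows "A *v (X *v y) = y"
  using assms unfolding penrose_def col_space_def
  by (auto simp: matrix_vector_mul_assoc)

lemma orthogonal_projector_col_space:
  fixes A :: "real^'c^'r"
  assumes "penrose A X"
  shows "orthogonal_projector (col_space A) (\<lambda>y. A *v (X *v y))"
  unfolding orthogonal_projector_def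
proof (intro conjI allI impI)
  fix y z :: "real^'r" assume "z \<in> col_space A"
  then obtain c where z: "z = A *v c" unfolding col_space_def by auto
  have "transpose A = transpose (A ** X ** A)" using assms unfolding penrose_def by simp
  also have "\<dots> = transpose A ** transpose (A ** X)"
    by (rule matrix_transpose_mul)
  also have "\<dots> = transpose A ** (A ** X)"
    using assms unfolding penrose_def by simp
  finally have "transpose A *v (y - A *v (X *v y)) = 0"
    by (metis matrix_vector_mul_assoc matrix_vector_mult_diff_distrib right_minus_eq)
  then show "(y - A *v (X *v y)) \<bullet> z = 0"
    unfolding z by (metis dot_lmul_matrix inner_zero_left transpose_matrix_vector)
qed (auto simp: col_space_def)

definition unit_orth_compl :: "'a::real_inner set \<Rightarrow> (nat \<Rightarrow> 'a) \<Rightarrow> nat \<Rightarrow> 'a set" where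
  "unit_orth_compl U u j = {a \<in> U. norm a = 1 \<and> (\<forall>i<j. a \<bullet> u i = 0)}"

lemma principal_vectors_iff:
  "principal_vectors U V k u w \<longleftrightarrow>
     (\<forall>j<k. u j \<in> unit_orth_compl U u j \<and> w j \<in> unit_orth_compl V w j \<and>
        (\<forall>a \<in> unit_orth_compl U u j. \<forall>b \<in> unit_orth_compl V w j. \<bar>a \<bullet> b\<bar> \<le> \<bar>u j \<bullet> w j\<bar>))"
  unfolding principal_vectors_def unit_orth_compl_def by auto

lemma unit_orth_compl_cong:
  "(\<And>i. i < j \<Longrightarrow> u i = u' i) \<Longrightarrow> unit_orth_compl U u j = unit_orth_compl U u' j"
  unfolding unit_orth_compl_def by simp

lemma principal_vectors_commute:
  "principal_vectors U V k u w \<Longrightarrow> principal_vectors V U k w u"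
  unfolding principal_vectors_def by (metis inner_commute)

lemma principal_vectors_orthonormal:
  assumes "principal_vectors U V k u w" and "i < k" and "j < k"
  shows "u i \<bullet> u j = (if i = j then 1 else 0)"
proof -
  have "u i \<bullet> u i = 1" "\<forall>i'<i. u i \<bullet> u i' = 0" "\<forall>j'<j. u j \<bullet> u j' = 0"
    using assms unfolding principal_vectors_def by (auto simp: norm_eq_1)
  then show ?thesis
    by (cases i j rule: linorder_cases) (auto simp: inner_commute)
qed

lemma sin_principal_angle_squared:
  assumes "principal_vectors U V k u w" and "i < k"
  shows "(sin (principal_angle u w i))\<^sup>2 = 1 - (u i \<bullet> w i)\<^sup>2"
proof -
  have "norm (u i) = 1" "norm (w i) = 1"
    using assms unfolding principal_vectors_def by auto
  then have "\<bar>u i \<bullet> w i\<bar> \<le> 1" using Cauchy_Schwarz_ineq2[of "u i" "w i"] by simp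
  then show ?thesis
    unfolding principal_angle_def by (simp add: sin_arccos abs_square_le_1)
qed

lemma eq_inner_scaleR_if_norm_le_abs_inner:
  fixes x y :: "'a::real_inner"
  assumes "norm y = 1" and "norm x \<le> \<bar>x \<bullet> y\<bar>"
  shows "x = (x \<bullet> y) *\<^sub>R y"
proof -
  have "norm x = \<bar>x \<bullet> y\<bar>"
    using Cauchy_Schwarz_ineq2[of x y] assms by simp
  then have "(x \<bullet> y)\<^sup>2 = x \<bullet> x"
    by (metis power2_abs power2_norm_eq_inner)
  moreover have "(x - (x \<bullet> y) *\<^sub>R y) \<bullet> (x - (x \<bullet> y) *\<^sub>R y) = x \<bullet> x - (x \<bullet> y)\<^sup>2"
    using assms(1) by (simp add: inner_diff_left inner_diff_right inner_commute power2_eq_square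
        norm_eq_1[symmetric])
  ultimately show ?thesis by simp
qed

lemma principal_vectors_projection_step:
  assumes pv: "principal_vectors U V k u w" and "j < k" and "subspace V"
    and PV: "orthogonal_projector V PV" and PU: "orthogonal_projector U PU"
    and earlier: "\<And>i. i < j \<Longrightarrow> PU (w i) = (u i \<bullet> w i) *\<^sub>R u i"
  shows "PV (u j) = (u j \<bullet> w j) *\<^sub>R w j"
proof -
  have u: "\<And>i. i < k \<Longrightarrow> u i \<in> unit_orth_compl U u i"
    and w: "\<And>i. i < k \<Longrightarrow> w i \<in> unit_orth_compl V w i"
    and max: "\<And>a b. a \<in> unit_orth_compl U u j \<Longrightarrow> b \<in> unit_orth_compl V w j \<Longrightarrow>
                 \<bar>a \<bullet> b\<bar> \<le> \<bar>u j \<bullet> w j\<bar>"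
    using pv \<open>j < k\<close> unfolding principal_vectors_iff by blast+
  define p where "p = PV (u j)"
  have p: "p \<in> V" "\<And>z. z \<in> V \<Longrightarrow> u j \<bullet> z = p \<bullet> z"
    using PV unfolding orthogonal_projector_def p_def
    by (blast, metis diff_eq_eq inner_diff_left add_0)
  have uj_w: "u j \<bullet> w j = p \<bullet> w j"
    using p(2) w[OF \<open>j < k\<close>] unfolding unit_orth_compl_def by blast
  have uj_p: "u j \<bullet> p = p \<bullet> p"
    using p by blast
  have p_orth: "p \<bullet> w i = 0" if "i < j" for i
  proof -
    have "p \<bullet> w i = u j \<bullet> w i"
      using p(2)[of "w i"] w[of i] that \<open>j < k\<close> unfolding unit_orth_compl_def by simp
    also have "\<dots> = u j \<bullet> PU (w i)"
    proof -
      have "(w i - PU (w i)) \<bullet> u j = 0"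
        using PU u \<open>j < k\<close> unfolding orthogonal_projector_def unit_orth_compl_def by blast
      then show ?thesis by (simp add: inner_diff_left inner_diff_right inner_commute)
    qed
    also have "\<dots> = 0"
      using earlier[OF that] u \<open>j < k\<close> that unfolding unit_orth_compl_def by auto
    finally show ?thesis .
  qed
  show ?thesis
  proof (cases "p = 0")
    case True
    then show ?thesis using uj_w p_def by simp
  next
    case False
    have "p /\<^sub>R norm p \<in> unit_orth_compl V w j"
      using False p_orth p(1) \<open>subspace V\<close> unfolding unit_orth_compl_def by (simp add: subspace_scale)
    then have "\<bar>u j \<bullet> (p /\<^sub>R norm p)\<bar> \<le> \<bar>u j \<bullet> w j\<bar>"
      using max u \<open>j < k\<close> by blast
    moreover have "u j \<bullet> (p /\<^sub>R norm p) = norm p"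
      using uj_p False by (simp add: dot_square_norm power2_eq_square)
    ultimately have "norm p \<le> \<bar>p \<bullet> w j\<bar>" using uj_w by simp
    then have "p = (p \<bullet> w j) *\<^sub>R w j"
      using eq_inner_scaleR_if_norm_le_abs_inner w \<open>j < k\<close> unfolding unit_orth_compl_def by blast
    then show ?thesis using uj_w p_def by simp
  qed
qed

lemma principal_vectors_projection:
  assumes pv: "principal_vectors U V k u w" and "subspace U" and "subspace V"
    and PU: "orthogonal_projector U PU" and PV: "orthogonal_projector V PV"
    and "j < k"
  shows "PV (u j) = (u j \<bullet> w j) *\<^sub>R w j \<and> PU (w j) = (u j \<bullet> w j) *\<^sub>R u j"
  using \<open>j < k\<close>
proof (induction j rule: less_induct)
  case (less j)
  have "PV (u j) = (u j \<bullet> w j) *\<^sub>R w j"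
    by (rule principal_vectors_projection_step[OF pv less.prems \<open>subspace V\<close> PV PU])
      (use less.IH less.prems in auto)
  moreover have "PU (w j) = (w j \<bullet> u j) *\<^sub>R u j"
    by (rule principal_vectors_projection_step[OF principal_vectors_commute[OF pv] less.prems
          \<open>subspace U\<close> PU PV])
      (use less.IH less.prems in \<open>auto simp: inner_commute\<close>)
  ultimately show ?case by (simp add: inner_commute)
qed

lemma unit_orth_compl_nonempty:
  fixes U :: "'a::euclidean_space set"
  assumes "subspace U" and "j < dim U" and "\<And>i. i < j \<Longrightarrow> u i \<in> U"
  shows "unit_orth_compl U u j \<noteq> {}"
proof -
  let ?S = "u ` {..<j}"
  have "\<not> U \<subseteq> span ?S"
  proof
    assume "U \<subseteq> span ?S"
    then have "dim U \<le> dim ?S" by (metis dim_span dim_subset)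
    also have "\<dots> \<le> card ?S" by (rule dim_le_card') simp
    also have "\<dots> \<le> j" using card_image_le[of "{..<j}" u] by simp
    finally show False using \<open>j < dim U\<close> by simp
  qed
  then obtain x where "x \<in> U" and "x \<notin> span ?S" by blast
  obtain y z where y: "y \<in> span ?S" and z: "\<And>v. v \<in> span ?S \<Longrightarrow> orthogonal z v"
    and xyz: "x = y + z"
    using orthogonal_subspace_decomp_exists[of ?S x] by blast
  have "span ?S \<subseteq> U" by (rule span_minimal) (use assms in auto)
  then have "z \<in> U"
    using xyz \<open>x \<in> U\<close> y \<open>subspace U\<close> by (metis add_diff_cancel_left' subset_iff subspace_diff)
  moreover have "z \<noteq> 0" using xyz \<open>x \<notin> span ?S\<close> y by auto
  moreover have "z \<bullet> u i = 0" if "i < j" for i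
    using z[of "u i"] that by (auto simp: orthogonal_def intro: span_base)
  ultimately have "z /\<^sub>R norm z \<in> unit_orth_compl U u j"
    unfolding unit_orth_compl_def using \<open>subspace U\<close> by (simp add: subspace_scale)
  then show ?thesis by blast
qed

lemma compact_unit_orth_compl:
  fixes U :: "'a::euclidean_space set"
  assumes "subspace U"
  shows "compact (unit_orth_compl U u j)"
proof -
  have "subspace {a. \<forall>i<j. a \<bullet> u i = 0}"
    unfolding subspace_def by (auto simp: inner_add_left)
  then have "closed (U \<inter> {a. \<forall>i<j. a \<bullet> u i = 0})"
    by (intro closed_subspace subspace_inter assms)
  moreover have "unit_orth_compl U u j = sphere 0 1 \<inter> (U \<inter> {a. \<forall>i<j. a \<bullet> u i = 0})"
    unfolding unit_orth_compl_def by auto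
  ultimately show ?thesis by (simp add: compact_Int_closed)
qed

lemma principal_vectors_extend:
  assumes pv: "principal_vectors U V k u w"
    and ab: "a \<in> unit_orth_compl U u k" "b \<in> unit_orth_compl V w k"
    and max: "\<And>a' b'. a' \<in> unit_orth_compl U u k \<Longrightarrow> b' \<in> unit_orth_compl V w k \<Longrightarrow>
                \<bar>a' \<bullet> b'\<bar> \<le> \<bar>a \<bullet> b\<bar>"
  shows "principal_vectors U V (Suc k) (u(k := a)) (w(k := b))"
  unfolding principal_vectors_iff
proof (intro allI impI)
  fix j assume "j < Suc k"
  then have same: "unit_orth_compl U (u(k := a)) j = unit_orth_compl U u j"
    "unit_orth_compl V (w(k := b)) j = unit_orth_compl V w j"
    by (auto intro!: unit_orth_compl_cong)
  from \<open>j < Suc k\<close> consider "j < k" | "j = k" by linarith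
  then show "(u(k := a)) j \<in> unit_orth_compl U (u(k := a)) j \<and>
      (w(k := b)) j \<in> unit_orth_compl V (w(k := b)) j \<and>
      (\<forall>a'\<in>unit_orth_compl U (u(k := a)) j. \<forall>b'\<in>unit_orth_compl V (w(k := b)) j.
         \<bar>a' \<bullet> b'\<bar> \<le> \<bar>(u(k := a)) j \<bullet> (w(k := b)) j\<bar>)"
  proof cases
    case 1
    then have "(u(k := a)) j = u j" "(w(k := b)) j = w j" by simp_all
    with pv 1 show ?thesis unfolding same principal_vectors_iff by presburger
  next
    case 2
    with ab max show ?thesis unfolding same by simp
  qed
qed

lemma principal_vectors_exist:
  fixes U V :: "'a::euclidean_space set"
  assumes "subspace U" and "subspace V" and "k \<le> dim U" and "k \<le> dim V"
  shows "\<exists>u w. principal_vectors U V k u w"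
  using assms(3,4)
proof (induction k)
  case 0
  show ?case by (simp add: principal_vectors_def)
next
  case (Suc k)
  then obtain u w where pv: "principal_vectors U V k u w" by auto
  let ?S = "unit_orth_compl U u k" and ?T = "unit_orth_compl V w k"
  have "\<forall>i<k. u i \<in> U \<and> w i \<in> V"
    using pv unfolding principal_vectors_def by blast
  then have "?S \<noteq> {}" "?T \<noteq> {}"
    using Suc.prems assms(1,2) by (simp_all add: unit_orth_compl_nonempty)
  moreover have "compact (?S \<times> ?T)"
    using assms(1,2) by (simp add: compact_Times compact_unit_orth_compl)
  ultimately have "\<exists>p\<in>?S \<times> ?T. \<forall>q\<in>?S \<times> ?T. \<bar>fst q \<bullet> snd q\<bar> \<le> \<bar>fst p \<bullet> snd p\<bar>"
    by (intro continuous_attains_sup) (auto intro!: continuous_intros)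
  then obtain a b where "a \<in> ?S" "b \<in> ?T"
    and "\<And>a' b'. a' \<in> ?S \<Longrightarrow> b' \<in> ?T \<Longrightarrow> \<bar>a' \<bullet> b'\<bar> \<le> \<bar>a \<bullet> b\<bar>" by force
  with pv show ?case by (blast intro: principal_vectors_extend)
qed

lemma column_matrix_mult: "column k (A ** P) = A *v column k P"
  by (simp add: column_def matrix_matrix_mult_def matrix_vector_mult_def vec_eq_iff)

lemma det_sub_eq_prod_if_eigenbasis:
  fixes M P :: "real^'n^'n" and lam :: "'n \<Rightarrow> real"
  assumes "det P \<noteq> 0" and eigen: "\<And>k. M *v column k P = lam k *\<^sub>R column k P"
  shows "det (t *\<^sub>R mat 1 - M) = (\<Prod>k\<in>UNIV. t - lam k)"
proof -
  define D :: "real^'n^'n" where "D = (\<chi> a b. if a = b then t - lam a else 0)"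
  have "column k ((t *\<^sub>R mat 1 - M) ** P) = column k (P ** D)" for k
  proof -
    have "column k ((t *\<^sub>R mat 1 - M) ** P) = (t - lam k) *\<^sub>R column k P"
      by (simp add: column_matrix_mult matrix_vector_mult_diff_rdistrib eigen
          scaleR_matrix_vector_assoc[symmetric] algebra_simps)
    also have "\<dots> = column k (P ** D)"
      by (simp add: column_def matrix_matrix_mult_def D_def vec_eq_iff if_distrib if_distribR
          cong: if_cong)
    finally show ?thesis .
  qed
  then have "(t *\<^sub>R mat 1 - M) ** P = P ** D"
    by (simp add: column_def vec_eq_iff)
  then have "det (t *\<^sub>R mat 1 - M) * det P = det P * det D" by (metis det_mul)
  moreover have "det D = (\<Prod>k\<in>UNIV. t - lam k)"
    by (subst det_diagonal) (auto simp: D_def)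
  ultimately show ?thesis using \<open>det P \<noteq> 0\<close> by simp
qed

lemma det_nonzero_if_orthonormal_image:
  fixes A :: "real^'n^'m" and P :: "real^'n^'n"
  assumes "transpose (A ** P) ** (A ** P) = mat 1"
  shows "det P \<noteq> 0"
proof
  assume "det P = 0"
  have "transpose (A ** P) ** (A ** P) = transpose P ** (transpose A ** A) ** P"
    by (simp add: matrix_transpose_mul matrix_mul_assoc)
  then have "det (transpose (A ** P) ** (A ** P)) = 0"
    using \<open>det P = 0\<close> by (simp add: det_mul)
  then show False using assms by simp
qed

lemma det_sub_eq_prod_if_orthonormal_eigenvectors:
  fixes M :: "real^'s^'s" and A :: "real^'s^'r" and v :: "nat \<Rightarrow> real^'s"
  assumes eigen: "\<And>i. i < CARD('s) \<Longrightarrow> M *v v i = lam i *\<^sub>R v i"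
    and orthonormal: "\<And>i j. i < CARD('s) \<Longrightarrow> j < CARD('s) \<Longrightarrow>
                         (A *v v i) \<bullet> (A *v v j) = (if i = j then 1 else 0)"
  shows "det (t *\<^sub>R mat 1 - M) = (\<Prod>i<CARD('s). t - lam i)"
proof -
  obtain g where g: "bij_betw g (UNIV :: 's set) {..<CARD('s)}"
    using ex_bij_betw_finite_nat[of "UNIV :: 's set"] by (auto simp: atLeast0LessThan)
  then have g_less: "\<And>k. g k < CARD('s)" and g_inj: "\<And>a b. g a = g b \<longleftrightarrow> a = b"
    by (auto simp: bij_betw_def inj_eq)
  define P :: "real^'s^'s" where "P = (\<chi> r k. v (g k) $ r)"
  have column_P: "column k P = v (g k)" for k
    by (simp add: P_def column_def vec_eq_iff)
  have "transpose (A ** P) ** (A ** P) = mat 1"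
    using orthonormal[OF g_less g_less]
    by (simp add: matrix_mult_transpose_dot_column column_matrix_mult column_P g_inj mat_def
        vec_eq_iff)
  then have "det P \<noteq> 0" by (rule det_nonzero_if_orthonormal_image)
  then have "det (t *\<^sub>R mat 1 - M) = (\<Prod>k\<in>UNIV. t - lam (g k))"
    by (rule det_sub_eq_prod_if_eigenbasis) (simp add: column_P eigen g_less)
  also have "\<dots> = (\<Prod>i<CARD('s). t - lam i)"
    by (rule prod.reindex_bij_betw[OF g])
  finally show ?thesis .
qed

definition consistency_matrix :: "real^'s^'r \<Rightarrow> real^'s^'r \<Rightarrow> real^'s^'s" where
  "consistency_matrix A B = mat 1 - (pinv A ** B) ** (pinv B ** A)"

lemma consistency_matrix_eigenvector:
  fixes A B :: "real^'s^'r"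
  assumes pA: "penrose A (pinv A)" and pB: "penrose B (pinv B)"
    and pv: "principal_vectors (col_space A) (col_space B) k u w" and "i < k"
  shows "consistency_matrix A B *v (pinv A *v u i) =
           (sin (principal_angle u w i))\<^sup>2 *\<^sub>R (pinv A *v u i)"
proof -
  define c where "c = u i \<bullet> w i"
  define v where "v = pinv A *v u i"
  have proj: "B *v (pinv B *v u i) = c *\<^sub>R w i" "A *v (pinv A *v w i) = c *\<^sub>R u i"
    using principal_vectors_projection[OF pv subspace_col_space subspace_col_space
        orthogonal_projector_col_space[OF pA] orthogonal_projector_col_space[OF pB] \<open>i < k\<close>]
    unfolding c_def by auto
  have "u i \<in> col_space A"
    using pv \<open>i < k\<close> unfolding principal_vectors_def by blast
  then have Av: "A *v v = u i"
    unfolding v_def by (rule penrose_mult_col_space[OF pA])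
  have "pinv A *v w i = pinv A *v (A *v (pinv A *v w i))"
    using pA unfolding penrose_def by (metis matrix_vector_mul_assoc)
  also have "\<dots> = c *\<^sub>R v"
    unfolding proj v_def by (simp add: matrix_vector_mult_scaleR)
  finally have w_back: "pinv A *v w i = c *\<^sub>R v" .
  have "consistency_matrix A B *v v = v - pinv A *v (B *v (pinv B *v (A *v v)))"
    unfolding consistency_matrix_def
    by (simp only: matrix_vector_mult_diff_rdistrib matrix_vector_mul_lid
        matrix_vector_mul_assoc[symmetric])
  also have "\<dots> = v - c *\<^sub>R (pinv A *v w i)"
    unfolding Av proj by (simp add: matrix_vector_mult_scaleR)
  also have "\<dots> = (1 - c\<^sup>2) *\<^sub>R v"
    unfolding w_back by (simp add: algebra_simps power2_eq_square)
  finally show ?thesis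
    unfolding sin_principal_angle_squared[OF pv \<open>i < k\<close>] c_def v_def .
qed

theorem lemma1:
  fixes T :: "real^'d \<Rightarrow> real^'d"
    and Xdom :: "(real^'d) set"
    and x :: "'N::finite \<Rightarrow> real^'d"
    and psi :: "'s::finite \<Rightarrow> real^'d \<Rightarrow> real"
    and A B :: "real^'s^'N"
    and Kf Kb Mc :: "real^'s^'s"
  assumes "T ` Xdom \<subseteq> Xdom"
    and "\<And>i. x i \<in> Xdom"
    and A_def: "A = (\<chi> i j. psi j (x i))"
    and B_def: "B = (\<chi> i j. psi j (T (x i)))"
    and "rank A = CARD('s)"
    and "rank B = CARD('s)"
    and Kf_def: "Kf = pinv A ** B"
    and Kb_def: "Kb = pinv B ** A"
    and Mc_def: "Mc = mat 1 - Kf ** Kb"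
  shows "(\<forall>u w. principal_vectors (col_space A) (col_space B) CARD('s) u w \<longrightarrow>
            (\<forall>t::real. det (t *\<^sub>R mat 1 - Mc) =
               (\<Prod>i<CARD('s). t - (sin (principal_angle u w i))\<^sup>2)))
       \<and> (\<exists>u w v. principal_vectors (col_space A) (col_space B) CARD('s) u w \<and>
            (\<forall>i<CARD('s). v i \<noteq> 0 \<and>
               Mc *v v i = (sin (principal_angle u w i))\<^sup>2 *\<^sub>R v i \<and>
               A *v v i = u i))"
proof -
  have pA: "penrose A (pinv A)" and pB: "penrose B (pinv B)"
    using penrose_pinv_if_full_column_rank \<open>rank A = CARD('s)\<close> \<open>rank B = CARD('s)\<close> by blast+
  have Mc: "Mc = consistency_matrix A B"
    unfolding Mc_def Kf_def Kb_def consistency_matrix_def ..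
  have image: "A *v (pinv A *v u i) = u i" "norm (u i) = 1"
    if "principal_vectors (col_space A) (col_space B) CARD('s) u w" "i < CARD('s)" for u w i
    using that penrose_mult_col_space[OF pA] unfolding principal_vectors_def by blast+
  note eigen = consistency_matrix_eigenvector[OF pA pB, folded Mc]
  show ?thesis
  proof (intro conjI allI impI)
    fix u w and t :: real
    assume pv: "principal_vectors (col_space A) (col_space B) CARD('s) u w"
    show "det (t *\<^sub>R mat 1 - Mc) = (\<Prod>i<CARD('s). t - (sin (principal_angle u w i))\<^sup>2)"
      by (rule det_sub_eq_prod_if_orthonormal_eigenvectors
          [where A = A and v = "\<lambda>i. pinv A *v u i"])
        (simp_all add: eigen[OF pv] image[OF pv] principal_vectors_orthonormal[OF pv])
  next
    obtain u w where pv: "principal_vectors (col_space A) (col_space B) CARD('s) u w"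
      using principal_vectors_exist[OF subspace_col_space subspace_col_space]
        \<open>rank A = CARD('s)\<close> \<open>rank B = CARD('s)\<close>
      by (metis dim_col_space order_refl)
    have "pinv A *v u i \<noteq> 0" if "i < CARD('s)" for i
      using image[OF pv that] by auto
    with pv show "\<exists>u w v. principal_vectors (col_space A) (col_space B) CARD('s) u w \<and>
            (\<forall>i<CARD('s). v i \<noteq> 0 \<and>
               Mc *v v i = (sin (principal_angle u w i))\<^sup>2 *\<^sub>R v i \<and>
               A *v v i = u i)"
      using eigen[OF pv] image[OF pv]
      by (intro exI[of _ u] exI[of _ w] exI[of _ "\<lambda>i. pinv A *v u i"]) simp
  qed
qed

end
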